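(* Let $\mathcal A$ be a unital C*-subalgebra of $l^\infty(\mathbb N)$ with maximal ideal space $X$ (weak* topology), and let $\iota:\mathbb N\to X$ be given by $\iota(n)(f)=f(n)$ for $f\in\mathcal A$. Then $\mathcal A$ is invariant under $\sigma_A$ (i.e. is an anqie) if and only if the map $\iota(n)\mapsto\iota(n+1)$ on $\iota(\mathbb N)$ extends to a continuous map from $X$ to $X$.
   Context: $\mathbb N=\{0,1,2,\ldots\}$ and $l^\infty(\mathbb N)$ is the C*-algebra of bounded complex-valued functions on $\mathbb N$; $\sigma_A:l^\infty(\mathbb N)\to l^\infty(\mathbb N)$ is $(\sigma_Af)(n)=f(n+1)$. An anqie is a unital C*-subalgebra of $l^\infty(\mathbb N)$ invariant under $\sigma_A$. The maximal ideal space of $\mathcal A$ is identified with the space of multiplicative states (nonzero characters) of $\mathcal A$. *)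

theory Defs
  imports "HOL-Analysis.Analysis"
begin

definition linfty :: "(nat \<Rightarrow> complex) set" where
  "linfty = {f. bounded (range f)}"

definition shiftA :: "(nat \<Rightarrow> complex) \<Rightarrow> (nat \<Rightarrow> complex)" where
  "shiftA f = (\<lambda>n. f (Suc n))"

definition unital_cstar_subalg :: "(nat \<Rightarrow> complex) set \<Rightarrow> bool" where
  "unital_cstar_subalg A \<longleftrightarrow>
     A \<subseteq> linfty \<and>
     (\<lambda>n. 1) \<in> A \<and>
     (\<forall>f\<in>A. \<forall>g\<in>A. (\<lambda>n. f n + g n) \<in> A) \<and>
     (\<forall>c. \<forall>f\<in>A. (\<lambda>n. c * f n) \<in> A) \<and>
     (\<forall>f\<in>A. \<forall>g\<in>A. (\<lambda>n. f n * g n) \<in> A) \<and>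
     (\<forall>f\<in>A. (\<lambda>n. cnj (f n)) \<in> A) \<and>
     (\<forall>f\<in>linfty. (\<forall>e>0. \<exists>g\<in>A. \<forall>n. norm (f n - g n) \<le> e) \<longrightarrow> f \<in> A)"

definition anqie :: "(nat \<Rightarrow> complex) set \<Rightarrow> bool" where
  "anqie A \<longleftrightarrow> unital_cstar_subalg A \<and> (\<forall>f\<in>A. shiftA f \<in> A)"

text \<open>Maximal ideal space: nonzero multiplicative linear functionals on A
  (represented extensionally, i.e. undefined outside A).\<close>
definition max_ideal_space :: "(nat \<Rightarrow> complex) set \<Rightarrow> ((nat \<Rightarrow> complex) \<Rightarrow> complex) set" where
  "max_ideal_space A = {\<phi>. \<phi> \<in> extensional A \<and>
     (\<forall>f\<in>A. \<forall>g\<in>A. \<phi> (\<lambda>n. f n + g n) = \<phi> f + \<phi> g) \<and>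
     (\<forall>c. \<forall>f\<in>A. \<phi> (\<lambda>n. c * f n) = c * \<phi> f) \<and>
     (\<forall>f\<in>A. \<forall>g\<in>A. \<phi> (\<lambda>n. f n * g n) = \<phi> f * \<phi> g) \<and>
     (\<exists>f\<in>A. \<phi> f \<noteq> 0)}"

definition weakstar_top :: "(nat \<Rightarrow> complex) set \<Rightarrow> ((nat \<Rightarrow> complex) \<Rightarrow> complex) topology" where
  "weakstar_top A = subtopology (product_topology (\<lambda>_. euclidean) A) (max_ideal_space A)"

definition iota :: "(nat \<Rightarrow> complex) set \<Rightarrow> nat \<Rightarrow> ((nat \<Rightarrow> complex) \<Rightarrow> complex)" where
  "iota A n = restrict (\<lambda>f. f n) A"

end

theory Submission
  imports Defs
begin

text \<open>
  If \<open>\<A>\<close> is shift invariant, the transpose \<open>\<phi> \<mapsto> \<phi> \<circ> \<sigma>\<^sub>A\<close> of the shift is a weak* continuous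
  self-map of \<open>X\<close> sending \<open>\<iota>(n)\<close> to \<open>\<iota>(n+1)\<close>. Conversely, given such a continuous \<open>T\<close> and
  \<open>f \<in> \<A>\<close>, the function \<open>\<phi> \<mapsto> T(\<phi>)(f)\<close> is continuous on \<open>X\<close>. Characters are bounded by the
  sup norm and real on real elements, so \<open>X\<close> is compact and, by Stone--Weierstrass, Gelfand
  transforms of elements of \<open>\<A>\<close> are uniformly dense in \<open>C(X)\<close>. Evaluating an approximant at
  \<open>\<iota>(n)\<close> approximates \<open>f(n+1)\<close> uniformly in \<open>n\<close>; as \<open>\<A>\<close> is closed, \<open>\<sigma>\<^sub>A f \<in> \<A>\<close>.
\<close>

text \<open>
  The library's Stone--Weierstrass theorem needs a \<open>t2_space\<close> type, but \<open>'a \<Rightarrow> 'b\<close> cannot be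
  made one for arbitrary \<open>'a\<close> (it is already a metric space for countable \<open>'a\<close>). A copy of the
  function space carrying the product topology serves instead.
\<close>
typedef ('a, 'b) pointwise_fun = "UNIV :: ('a \<Rightarrow> 'b) set"
  morphisms fun_of pointwise by simp

instantiation pointwise_fun :: (type, topological_space) topological_space
begin

definition open_pointwise_fun :: "('a, 'b) pointwise_fun set \<Rightarrow> bool"
  where "open_pointwise_fun U \<longleftrightarrow> open (fun_of ` U)"

instance
proof
  show "open (UNIV :: ('a, 'b) pointwise_fun set)"
    by (simp add: open_pointwise_fun_def type_definition.Rep_range[OF type_definition_pointwise_fun])
next
  fix S T :: "('a, 'b) pointwise_fun set"
  assume "open S" "open T"
  then show "open (S \<inter> T)"
    unfolding open_pointwise_fun_def by (simp add: image_Int fun_of_inject inj_on_def open_Int)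
next
  fix K :: "('a, 'b) pointwise_fun set set"
  assume "\<forall>S\<in>K. open S"
  then show "open (\<Union>K)"
    unfolding open_pointwise_fun_def by (auto simp: image_Union)
qed

end

lemma open_vimage_fun_of: "open (fun_of -` W) \<longleftrightarrow> open W"
  by (simp add: open_pointwise_fun_def type_definition.Rep_range[OF type_definition_pointwise_fun])

lemma continuous_on_fun_of: "continuous_on UNIV fun_of"
  by (simp add: continuous_on_open_invariant open_vimage_fun_of)

lemma continuous_on_pointwise: "continuous_on UNIV pointwise"
proof -
  have "pointwise -` U = fun_of ` U" for U :: "('a, 'b::topological_space) pointwise_fun set"
    by (force simp: pointwise_inverse fun_of_inverse)
  then show ?thesis
    by (simp add: continuous_on_open_invariant open_pointwise_fun_def)
qed

instance pointwise_fun :: (type, t2_space) t2_space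
proof
  fix x y :: "('a, 'b) pointwise_fun"
  assume "x \<noteq> y"
  then have "fun_of x \<noteq> fun_of y" by (simp add: fun_of_inject)
  then obtain i where "fun_of x i \<noteq> fun_of y i" by (meson ext)
  from hausdorff[OF this] obtain U V
    where UV: "open U" "open V" "fun_of x i \<in> U" "fun_of y i \<in> V" "U \<inter> V = {}"
    by blast
  have "open (fun_of -` (\<lambda>f. f i) -` U)" "open (fun_of -` (\<lambda>f. f i) -` V)"
    using UV(1,2) by (simp_all add: open_vimage_fun_of open_vimage)
  moreover have "fun_of -` (\<lambda>f. f i) -` U \<inter> fun_of -` (\<lambda>f. f i) -` V = {}"
    using UV(5) by auto
  ultimately show "\<exists>U V. open U \<and> open V \<and> x \<in> U \<and> y \<in> V \<and> U \<inter> V = {}"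
    using UV(3,4) by blast
qed

lemma Stone_Weierstrass_fun:
  fixes R :: "(('a \<Rightarrow> 'b::t2_space) \<Rightarrow> real) set"
  assumes "compact S"
    and "\<And>F. F \<in> R \<Longrightarrow> continuous_on S F"
    and "\<And>F G. F \<in> R \<Longrightarrow> G \<in> R \<Longrightarrow> (\<lambda>x. F x + G x) \<in> R"
    and "\<And>F G. F \<in> R \<Longrightarrow> G \<in> R \<Longrightarrow> (\<lambda>x. F x * G x) \<in> R"
    and "\<And>c. (\<lambda>_. c) \<in> R"
    and "\<And>x y. x \<in> S \<Longrightarrow> y \<in> S \<Longrightarrow> x \<noteq> y \<Longrightarrow> \<exists>F\<in>R. F x \<noteq> F y"
    and "continuous_on S f" and "e > 0"
  shows "\<exists>F\<in>R. \<forall>x\<in>S. \<bar>f x - F x\<bar> < e"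
proof -
  have S: "fun_of ` pointwise ` S = S"
    by (force simp: pointwise_inverse)
  have continuous_lift: "continuous_on (pointwise ` S) (F \<circ> fun_of)"
    if "continuous_on S F" for F :: "('a \<Rightarrow> 'b) \<Rightarrow> real"
    by (rule continuous_on_compose[OF continuous_on_subset[OF continuous_on_fun_of]])
      (simp_all add: S that)
  interpret function_ring_on "(\<lambda>F. F \<circ> fun_of) ` R" "pointwise ` S"
  proof
    show "compact (pointwise ` S)"
      using assms(1) continuous_on_subset[OF continuous_on_pointwise]
      by (metis compact_continuous_image top_greatest)
    show "F \<in> (\<lambda>F. F \<circ> fun_of) ` R \<Longrightarrow> continuous_on (pointwise ` S) F" for F
      using assms(2) continuous_lift by blast
    show "(\<lambda>x. F x + G x) \<in> (\<lambda>F. F \<circ> fun_of) ` R" and "(\<lambda>x. F x * G x) \<in> (\<lambda>F. F \<circ> fun_of) ` R"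
      if "F \<in> (\<lambda>F. F \<circ> fun_of) ` R" "G \<in> (\<lambda>F. F \<circ> fun_of) ` R" for F G
      using that assms(3,4) by (force simp: o_def)+
    show "(\<lambda>_. c) \<in> (\<lambda>F. F \<circ> fun_of) ` R" for c
      using assms(5) by (force simp: o_def)
    show "\<exists>F\<in>(\<lambda>F. F \<circ> fun_of) ` R. F x \<noteq> F y"
      if xy: "x \<in> pointwise ` S" "y \<in> pointwise ` S" "x \<noteq> y" for x y
    proof -
      obtain x' y' where "x' \<in> S" "y' \<in> S" "x = pointwise x'" "y = pointwise y'"
        using xy(1,2) by blast
      with xy(3) obtain F where "F \<in> R" "F x' \<noteq> F y'" using assms(6) by blast
      then show ?thesis
        using \<open>x = pointwise x'\<close> \<open>y = pointwise y'\<close> by (auto simp: pointwise_inverse)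
    qed
  qed
  obtain F where "F \<in> R" "\<forall>x\<in>pointwise ` S. \<bar>f (fun_of x) - F (fun_of x)\<bar> < e"
    using Stone_Weierstrass_basic[OF continuous_lift[OF assms(7)] assms(8)] by auto
  then show ?thesis
    by (auto simp: pointwise_inverse)
qed

definition shift_transpose ::
  "(nat \<Rightarrow> complex) set \<Rightarrow> ((nat \<Rightarrow> complex) \<Rightarrow> complex) \<Rightarrow> (nat \<Rightarrow> complex) \<Rightarrow> complex"
  where "shift_transpose A \<phi> = restrict (\<lambda>f. \<phi> (shiftA f)) A"

locale unital_cstar_subalgebra =
  fixes A :: "(nat \<Rightarrow> complex) set"
  assumes unital_cstar_subalg: "unital_cstar_subalg A"
begin

abbreviation X where "X \<equiv> max_ideal_space A"

lemma subset_linfty: "A \<subseteq> linfty"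
  and one_mem: "(\<lambda>n. 1) \<in> A"
  and add_mem: "f \<in> A \<Longrightarrow> g \<in> A \<Longrightarrow> (\<lambda>n. f n + g n) \<in> A"
  and scale_mem: "f \<in> A \<Longrightarrow> (\<lambda>n. c * f n) \<in> A"
  and mult_mem: "f \<in> A \<Longrightarrow> g \<in> A \<Longrightarrow> (\<lambda>n. f n * g n) \<in> A"
  and cnj_mem: "f \<in> A \<Longrightarrow> (\<lambda>n. cnj (f n)) \<in> A"
  and uniform_approx_mem:
    "f \<in> linfty \<Longrightarrow> (\<And>e. e > 0 \<Longrightarrow> \<exists>g\<in>A. \<forall>n. norm (f n - g n) \<le> e) \<Longrightarrow> f \<in> A"
  using unital_cstar_subalg unfolding unital_cstar_subalg_def by blast+

lemma const_mem: "(\<lambda>n. c) \<in> A"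
  using scale_mem[OF one_mem, of c] by simp

lemma bounded_mem: "f \<in> A \<Longrightarrow> \<exists>K. \<forall>n. norm (f n) \<le> K"
  using subset_linfty unfolding linfty_def by (auto simp: bounded_iff)

lemma power_mem: "f \<in> A \<Longrightarrow> (\<lambda>n. f n ^ k) \<in> A"
  by (induction k) (simp_all add: one_mem mult_mem)

lemma sum_mem: "finite I \<Longrightarrow> (\<And>i. i \<in> I \<Longrightarrow> g i \<in> A) \<Longrightarrow> (\<lambda>n. \<Sum>i\<in>I. g i n) \<in> A"
  by (induction I rule: finite_induct) (simp_all add: const_mem add_mem)

lemma Re_mem: "f \<in> A \<Longrightarrow> (\<lambda>n. complex_of_real (Re (f n))) \<in> A"
proof -
  assume f: "f \<in> A"
  have "(\<lambda>n. complex_of_real (Re (f n))) = (\<lambda>n. (1/2) * (f n + cnj (f n)))"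
    by (auto simp: complex_add_cnj)
  then show ?thesis
    by (simp only:) (rule scale_mem[OF add_mem[OF f cnj_mem[OF f]]])
qed

lemma Im_mem: "f \<in> A \<Longrightarrow> (\<lambda>n. complex_of_real (Im (f n))) \<in> A"
proof -
  assume f: "f \<in> A"
  have "(\<lambda>n. complex_of_real (Im (f n))) = (\<lambda>n. (- \<i>/2) * (f n + (-1) * cnj (f n)))"
    by (auto simp: complex_eq_iff)
  then show ?thesis
    by (simp only:) (rule scale_mem[OF add_mem[OF f scale_mem[OF cnj_mem[OF f]]]])
qed

text \<open>Neumann series: \<open>1/f = \<Sum>\<^sub>k (1 - f)\<^sup>k\<close> converges uniformly.\<close>
lemma inverse_mem:
  assumes f: "f \<in> A" and q: "q < 1" and fq: "\<And>n. norm (1 - f n) \<le> q"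
  shows "(\<lambda>n. 1 / f n) \<in> A"
proof -
  define r where "r = (\<lambda>n. 1 - f n)"
  have rA: "r \<in> A"
    unfolding r_def using add_mem[OF one_mem scale_mem[OF f, of "-1"]] by simp
  have q0: "0 \<le> q" using fq[of 0] by (meson norm_ge_zero order_trans)
  have f_ge: "norm (f n) \<ge> 1 - q" for n
    using norm_triangle_ineq[of "f n" "1 - f n"] fq[of n] by simp
  then have f_nz: "f n \<noteq> 0" for n using q by (metis norm_zero not_le diff_gt_0_iff_gt)
  show ?thesis
  proof (rule uniform_approx_mem)
    have "norm (1 / f n) \<le> 1 / (1 - q)" for n
      using f_ge[of n] q by (simp add: norm_divide divide_simps)
    then show "(\<lambda>n. 1 / f n) \<in> linfty"
      unfolding linfty_def by (auto simp: bounded_iff)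
  next
    fix e :: real
    assume e: "e > 0"
    obtain N where N: "q ^ N < e * (1 - q)"
      using real_arch_pow_inv[of "e * (1 - q)" q] e q by auto
    have "(\<lambda>n. \<Sum>k<N. r n ^ k) \<in> A"
      by (rule sum_mem) (simp_all add: power_mem[OF rA])
    moreover have "norm (1 / f n - (\<Sum>k<N. r n ^ k)) \<le> e" for n
    proof -
      have "f n * (\<Sum>k<N. r n ^ k) = 1 - r n ^ N"
        using one_diff_power_eq[of "r n" N] by (simp add: r_def)
      then have "1 / f n - (\<Sum>k<N. r n ^ k) = r n ^ N / f n"
        using f_nz[of n] by (simp add: field_simps)
      then have "norm (1 / f n - (\<Sum>k<N. r n ^ k)) = norm (r n) ^ N / norm (f n)"
        by (simp add: norm_divide norm_power)
      also have "\<dots> \<le> q ^ N / (1 - q)"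
        using q0 fq[of n] f_ge[of n] q by (intro frac_le) (auto simp: r_def intro: power_mono)
      also have "\<dots> \<le> e"
        using N q by (simp add: divide_simps)
      finally show ?thesis .
    qed
    ultimately show "\<exists>g\<in>A. \<forall>n. norm (1 / f n - g n) \<le> e"
      by (intro bexI[of _ "\<lambda>n. \<Sum>k<N. r n ^ k"]) auto
  qed
qed

lemma
  assumes "\<phi> \<in> X"
  shows char_extensional: "\<phi> \<in> extensional A"
    and char_add: "f \<in> A \<Longrightarrow> g \<in> A \<Longrightarrow> \<phi> (\<lambda>n. f n + g n) = \<phi> f + \<phi> g"
    and char_scale: "f \<in> A \<Longrightarrow> \<phi> (\<lambda>n. c * f n) = c * \<phi> f"
    and char_mult: "f \<in> A \<Longrightarrow> g \<in> A \<Longrightarrow> \<phi> (\<lambda>n. f n * g n) = \<phi> f * \<phi> g"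
    and char_nonzero: "\<exists>f\<in>A. \<phi> f \<noteq> 0"
  using assms unfolding max_ideal_space_def by blast+

lemma char_outside: "\<phi> \<in> X \<Longrightarrow> f \<notin> A \<Longrightarrow> \<phi> f = undefined"
  using char_extensional by (auto simp: extensional_def)

lemma char_one: "\<phi> \<in> X \<Longrightarrow> \<phi> (\<lambda>n. 1) = 1"
proof -
  assume \<phi>: "\<phi> \<in> X"
  obtain f where f: "f \<in> A" "\<phi> f \<noteq> 0" using char_nonzero[OF \<phi>] by blast
  have "\<phi> f = \<phi> f * \<phi> (\<lambda>n. 1)"
    using char_mult[OF \<phi> f(1) one_mem] by simp
  then show ?thesis using f(2) by simp
qed

lemma char_const: "\<phi> \<in> X \<Longrightarrow> \<phi> (\<lambda>n. c) = c"
  using char_scale[OF _ one_mem, of \<phi> c] char_one by simp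

lemma iota_mem: "iota A n \<in> X"
  unfolding max_ideal_space_def iota_def
  using one_mem add_mem scale_mem mult_mem by (auto intro!: bexI[of _ "\<lambda>n. 1"])

text \<open>If \<open>\<phi>(f) = \<lambda>\<close> with \<open>|\<lambda>| > sup |f|\<close>, then \<open>1 - f/\<lambda>\<close> is invertible in \<open>\<A>\<close>
  but killed by \<open>\<phi>\<close>.\<close>
lemma char_norm_le:
  assumes \<phi>: "\<phi> \<in> X" and f: "f \<in> A" and K: "\<And>n. norm (f n) \<le> K"
  shows "norm (\<phi> f) \<le> K"
proof (rule ccontr)
  assume "\<not> norm (\<phi> f) \<le> K"
  then have K_less: "K < norm (\<phi> f)" by simp
  have "K \<ge> 0" using K[of 0] by (meson norm_ge_zero order_trans)
  then have \<phi>f_nz: "\<phi> f \<noteq> 0" using K_less by auto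
  define c where "c = - 1 / \<phi> f"
  define h where "h = (\<lambda>n. 1 + c * f n)"
  have hA: "h \<in> A"
    unfolding h_def by (intro add_mem one_mem scale_mem f)
  have "\<phi> h = 1 + c * \<phi> f"
    unfolding h_def using char_add[OF \<phi> one_mem scale_mem[OF f]] char_scale[OF \<phi> f] char_one[OF \<phi>]
    by simp
  also have "\<dots> = 0"
    using \<phi>f_nz by (simp add: c_def)
  finally have \<phi>h: "\<phi> h = 0" .
  have q: "K / norm (\<phi> f) < 1" using K_less \<phi>f_nz by (simp add: divide_simps)
  have hq: "norm (1 - h n) \<le> K / norm (\<phi> f)" for n
    using K[of n] by (simp add: h_def c_def norm_divide norm_mult divide_right_mono)
  have h_nz: "h n \<noteq> 0" for n using hq[of n] q by auto
  have "\<phi> (\<lambda>n. h n * (1 / h n)) = \<phi> h * \<phi> (\<lambda>n. 1 / h n)"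
    by (rule char_mult[OF \<phi> hA inverse_mem[OF hA q hq]])
  moreover have "(\<lambda>n. h n * (1 / h n)) = (\<lambda>n. 1)" using h_nz by auto
  ultimately show False using \<phi>h char_one[OF \<phi>] by simp
qed

text \<open>By the norm bound, \<open>|\<phi>(h) + it|\<^sup>2 \<le> sup |h|\<^sup>2 + t\<^sup>2\<close> for real \<open>t\<close>, which fails for suitable
  \<open>t\<close> unless \<open>Im \<phi>(h) = 0\<close>.\<close>
lemma char_real:
  assumes \<phi>: "\<phi> \<in> X" and h: "h \<in> A" and h_real: "\<And>n. Im (h n) = 0"
  shows "Im (\<phi> h) = 0"
proof (rule ccontr)
  assume b_nz: "Im (\<phi> h) \<noteq> 0"
  obtain K where K: "\<And>n. norm (h n) \<le> K" using bounded_mem[OF h] by blast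
  have K_nonneg: "K \<ge> 0" using K[of 0] by (meson norm_ge_zero order_trans)
  define t where "t = (K\<^sup>2 + 1) / (2 * Im (\<phi> h))"
  define g where "g = (\<lambda>n. h n + \<i> * complex_of_real t)"
  have gA: "g \<in> A" unfolding g_def by (intro add_mem h const_mem)
  have \<phi>g: "\<phi> g = \<phi> h + \<i> * complex_of_real t"
    unfolding g_def using char_add[OF \<phi> h const_mem] char_const[OF \<phi>] by simp
  have "norm (g n) \<le> sqrt (K\<^sup>2 + t\<^sup>2)" for n
  proof -
    have "\<bar>Re (h n)\<bar> \<le> \<bar>K\<bar>" using abs_Re_le_cmod[of "h n"] K[of n] K_nonneg by linarith
    then have "(Re (h n))\<^sup>2 \<le> K\<^sup>2" by (simp only: abs_le_square_iff)
    moreover have "norm (g n) = sqrt ((Re (h n))\<^sup>2 + t\<^sup>2)"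
      using h_real[of n] by (simp add: g_def cmod_def)
    ultimately show ?thesis by simp
  qed
  then have "norm (\<phi> g) \<le> sqrt (K\<^sup>2 + t\<^sup>2)" by (rule char_norm_le[OF \<phi> gA])
  from power_mono[OF this norm_ge_zero, of 2] have "(norm (\<phi> g))\<^sup>2 \<le> K\<^sup>2 + t\<^sup>2"
    by simp
  moreover have "(norm (\<phi> g))\<^sup>2 = (Re (\<phi> h))\<^sup>2 + (Im (\<phi> h))\<^sup>2 + 2 * Im (\<phi> h) * t + t\<^sup>2"
    using \<phi>g by (simp add: cmod_power2 power2_sum)
  moreover have "2 * Im (\<phi> h) * t = K\<^sup>2 + 1" using b_nz by (simp add: t_def)
  moreover have "(Re (\<phi> h))\<^sup>2 \<ge> 0" "(Im (\<phi> h))\<^sup>2 \<ge> 0" by simp_all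
  ultimately show False by linarith
qed

lemma char_Re_Im:
  assumes \<phi>: "\<phi> \<in> X" and h: "h \<in> A"
  shows "\<phi> h = \<phi> (\<lambda>n. complex_of_real (Re (h n))) + \<i> * \<phi> (\<lambda>n. complex_of_real (Im (h n)))"
proof -
  have "h = (\<lambda>n. complex_of_real (Re (h n)) + \<i> * complex_of_real (Im (h n)))"
    by (simp add: complex_eq[symmetric])
  then have "\<phi> h = \<phi> (\<lambda>n. complex_of_real (Re (h n)) + \<i> * complex_of_real (Im (h n)))"
    by simp
  also have "\<dots> = \<phi> (\<lambda>n. complex_of_real (Re (h n))) + \<i> * \<phi> (\<lambda>n. complex_of_real (Im (h n)))"
    using char_add[OF \<phi> Re_mem[OF h] scale_mem[OF Im_mem[OF h]]] char_scale[OF \<phi> Im_mem[OF h]]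
    by simp
  finally show ?thesis .
qed

lemma char_separated_by_real:
  assumes \<phi>: "\<phi> \<in> X" and \<psi>: "\<psi> \<in> X" and "\<phi> \<noteq> \<psi>"
  shows "\<exists>h\<in>A. (\<forall>n. Im (h n) = 0) \<and> Re (\<phi> h) \<noteq> Re (\<psi> h)"
proof (rule ccontr)
  assume "\<not> ?thesis"
  then have real_eq: "\<phi> u = \<psi> u" if "u \<in> A" "\<And>n. Im (u n) = 0" for u
    using that char_real[OF \<phi> that] char_real[OF \<psi> that] by (auto simp: complex_eq_iff)
  have "\<phi> h = \<psi> h" for h
  proof (cases "h \<in> A")
    case True
    then show ?thesis
      using char_Re_Im[OF \<phi> True] char_Re_Im[OF \<psi> True]
        real_eq[OF Re_mem[OF True]] real_eq[OF Im_mem[OF True]] by simp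
  next
    case False
    then show ?thesis using char_outside[OF \<phi>] char_outside[OF \<psi>] by simp
  qed
  with \<open>\<phi> \<noteq> \<psi>\<close> show False by blast
qed

lemma max_ideal_space_eq:
  "X = {\<phi>. (\<forall>f. f \<notin> A \<longrightarrow> \<phi> f = undefined) \<and>
          (\<forall>f g c. f \<in> A \<longrightarrow> g \<in> A \<longrightarrow>
             \<phi> (\<lambda>n. f n + g n) = \<phi> f + \<phi> g \<and> \<phi> (\<lambda>n. c * f n) = c * \<phi> f \<and>
             \<phi> (\<lambda>n. f n * g n) = \<phi> f * \<phi> g) \<and>
          \<phi> (\<lambda>n. 1) = 1}"
  (is "_ = ?Y")
proof (intro set_eqI iffI)
  fix \<phi>
  assume \<phi>: "\<phi> \<in> X"
  then show "\<phi> \<in> ?Y"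
    using char_outside[OF \<phi>] char_add[OF \<phi>] char_scale[OF \<phi>] char_mult[OF \<phi>] char_one[OF \<phi>]
    by simp
next
  fix \<phi>
  assume \<phi>: "\<phi> \<in> ?Y"
  then have "\<phi> \<in> extensional A" "\<exists>f\<in>A. \<phi> f \<noteq> 0"
    using one_mem by (auto simp: extensional_def intro!: bexI[of _ "\<lambda>n. 1"])
  with \<phi> show "\<phi> \<in> X"
    unfolding max_ideal_space_def by blast
qed

lemma closed_max_ideal_space: "closed X"
proof -
  have coordinate: "continuous_on UNIV (\<lambda>\<phi>::(nat \<Rightarrow> complex) \<Rightarrow> complex. \<phi> f)" for f
    by simp
  show ?thesis
    by (subst max_ideal_space_eq, intro closed_Collect_conj closed_Collect_all closed_Collect_imp
        open_Collect_const closed_Collect_eq)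
      (intro continuous_intros coordinate)+
qed

lemma compact_max_ideal_space: "compact X"
proof -
  define B where
    "B = (\<lambda>f. if f \<in> A then cball (0::complex) (SOME K. \<forall>n. norm (f n) \<le> K) else {undefined})"
  have "X \<subseteq> PiE UNIV B"
  proof
    fix \<phi> assume \<phi>: "\<phi> \<in> X"
    have "\<phi> f \<in> B f" for f
    proof (cases "f \<in> A")
      case True
      then have "\<forall>n. norm (f n) \<le> (SOME K. \<forall>n. norm (f n) \<le> K)"
        using someI_ex[OF bounded_mem] by blast
      then show ?thesis using char_norm_le[OF \<phi> True] True by (simp add: B_def)
    qed (simp add: B_def char_outside[OF \<phi>])
    then show "\<phi> \<in> PiE UNIV B" by (simp add: PiE_iff)
  qed
  moreover have "compact (PiE UNIV B)"
    using compactin_PiE[of "\<lambda>_. euclidean" UNIV B]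
    by (auto simp: B_def euclidean_product_topology)
  ultimately show ?thesis
    using compact_Int_closed[OF _ closed_max_ideal_space] by (metis inf.absorb_iff2)
qed

lemma weakstar_top_eq: "weakstar_top A = top_of_set X"
proof -
  have top: "topspace (weakstar_top A) = X"
    unfolding weakstar_top_def topspace_subtopology topspace_product_topology
    using char_extensional by (auto simp: PiE_def)
  have "continuous_map (top_of_set X) (weakstar_top A) id"
    unfolding weakstar_top_def
    by (intro continuous_map_into_subtopology)
      (auto simp: continuous_map_componentwise char_extensional
        intro: continuous_on_subset[OF continuous_on_product_coordinates])
  moreover have "continuous_map (weakstar_top A) (top_of_set X) id"
  proof (intro continuous_map_into_subtopology)
    have "continuous_map (weakstar_top A) euclidean (\<lambda>\<phi>. \<phi> f)" for f
    proof (cases "f \<in> A")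
      case True
      then show ?thesis unfolding weakstar_top_def
        by (intro continuous_map_from_subtopology continuous_map_product_projection)
    next
      case False
      have "continuous_map (weakstar_top A) euclidean (\<lambda>\<phi>. undefined :: complex)"
        by simp
      then show ?thesis
        by (rule continuous_map_eq) (metis top char_outside False)
    qed
    then show "continuous_map (weakstar_top A) euclidean id"
      by (simp add: euclidean_product_topology[symmetric] continuous_map_componentwise_UNIV id_def)
  qed (simp add: top)
  ultimately have "homeomorphic_maps (top_of_set X) (weakstar_top A) id id"
    by (simp add: homeomorphic_maps_def)
  then show ?thesis
    using homeomorphic_map_id homeomorphic_map_maps by blast
qed

lemma real_gelfand_approx:
  fixes g :: "((nat \<Rightarrow> complex) \<Rightarrow> complex) \<Rightarrow> real"
  assumes "continuous_on X g" and "e > 0"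
  shows "\<exists>h\<in>A. (\<forall>n. Im (h n) = 0) \<and> (\<forall>\<phi>\<in>X. \<bar>g \<phi> - Re (\<phi> h)\<bar> < e)"
proof -
  define R where "R = {F. \<exists>h\<in>A. (\<forall>n. Im (h n) = 0) \<and> (\<forall>\<phi>\<in>X. F \<phi> = Re (\<phi> h))}"
  have "\<exists>F\<in>R. \<forall>\<phi>\<in>X. \<bar>g \<phi> - F \<phi>\<bar> < e"
  proof (rule Stone_Weierstrass_fun[OF compact_max_ideal_space _ _ _ _ _ assms])
    fix F
    assume "F \<in> R"
    then obtain h where h: "\<forall>\<phi>\<in>X. F \<phi> = Re (\<phi> h)"
      unfolding R_def by blast
    have "continuous_on X (\<lambda>\<phi>. Re (\<phi> h))"
      by (intro continuous_on_Re continuous_on_subset[OF continuous_on_product_coordinates]) simp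
    then show "continuous_on X F"
      by (rule continuous_on_eq) (use h in simp)
  next
    fix F G
    assume "F \<in> R" "G \<in> R"
    then obtain h k where h: "h \<in> A" "\<forall>n. Im (h n) = 0" "\<forall>\<phi>\<in>X. F \<phi> = Re (\<phi> h)"
      and k: "k \<in> A" "\<forall>n. Im (k n) = 0" "\<forall>\<phi>\<in>X. G \<phi> = Re (\<phi> k)"
      unfolding R_def by blast
    have "F \<phi> + G \<phi> = Re (\<phi> (\<lambda>n. h n + k n))" if "\<phi> \<in> X" for \<phi>
      using that h(3) k(3) char_add[OF that h(1) k(1)] by simp
    then show "(\<lambda>\<phi>. F \<phi> + G \<phi>) \<in> R"
      unfolding R_def using h(2) k(2) add_mem[OF h(1) k(1)]
      by (intro CollectI bexI[of _ "\<lambda>n. h n + k n"]) auto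
    have "F \<phi> * G \<phi> = Re (\<phi> (\<lambda>n. h n * k n))" if "\<phi> \<in> X" for \<phi>
      using that h k char_mult[OF that h(1) k(1)] char_real[OF that h(1)] char_real[OF that k(1)]
      by simp
    then show "(\<lambda>\<phi>. F \<phi> * G \<phi>) \<in> R"
      unfolding R_def using h(2) k(2) mult_mem[OF h(1) k(1)]
      by (intro CollectI bexI[of _ "\<lambda>n. h n * k n"]) auto
  next
    fix c :: real
    have "c = Re (\<phi> (\<lambda>n. complex_of_real c))" if "\<phi> \<in> X" for \<phi>
      using char_const[OF that, of "complex_of_real c"] by simp
    then show "(\<lambda>_. c) \<in> R"
      unfolding R_def using const_mem by (intro CollectI bexI[of _ "\<lambda>n. complex_of_real c"]) auto
  next
    fix \<phi> \<psi>
    assume "\<phi> \<in> X" "\<psi> \<in> X" "\<phi> \<noteq> \<psi>"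
    then obtain h where h: "h \<in> A" "\<forall>n. Im (h n) = 0" "Re (\<phi> h) \<noteq> Re (\<psi> h)"
      using char_separated_by_real by blast
    have "(\<lambda>\<phi>. Re (\<phi> h)) \<in> R"
      unfolding R_def using h(1,2) by (intro CollectI bexI[of _ h]) auto
    then show "\<exists>F\<in>R. F \<phi> \<noteq> F \<psi>"
      using h(3) by (intro bexI[of _ "\<lambda>\<phi>. Re (\<phi> h)"]) simp_all
  qed
  then obtain F h where "h \<in> A" "\<forall>n. Im (h n) = 0" "\<forall>\<phi>\<in>X. F \<phi> = Re (\<phi> h)"
    "\<forall>\<phi>\<in>X. \<bar>g \<phi> - F \<phi>\<bar> < e"
    unfolding R_def by blast
  then show ?thesis
    by (intro bexI[of _ h]) auto
qed

lemma gelfand_approx: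
  assumes g: "continuous_on X g" and e: "e > 0"
  shows "\<exists>h\<in>A. \<forall>\<phi>\<in>X. norm (g \<phi> - \<phi> h) < e"
proof -
  obtain u where u: "u \<in> A" "\<forall>n. Im (u n) = 0" "\<forall>\<phi>\<in>X. \<bar>Re (g \<phi>) - Re (\<phi> u)\<bar> < e/2"
    using real_gelfand_approx[OF continuous_on_Re[OF g], of "e/2"] e by auto
  obtain v where v: "v \<in> A" "\<forall>n. Im (v n) = 0" "\<forall>\<phi>\<in>X. \<bar>Im (g \<phi>) - Re (\<phi> v)\<bar> < e/2"
    using real_gelfand_approx[OF continuous_on_Im[OF g], of "e/2"] e by auto
  have "norm (g \<phi> - \<phi> (\<lambda>n. u n + \<i> * v n)) < e" if \<phi>: "\<phi> \<in> X" for \<phi>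
  proof -
    have "\<phi> (\<lambda>n. u n + \<i> * v n) = \<phi> u + \<i> * \<phi> v"
      using char_add[OF \<phi> u(1) scale_mem[OF v(1)]] char_scale[OF \<phi> v(1)] by simp
    moreover have "Im (\<phi> u) = 0" "Im (\<phi> v) = 0"
      using char_real[OF \<phi> u(1,2)[rule_format]] char_real[OF \<phi> v(1,2)[rule_format]] by auto
    ultimately have "norm (g \<phi> - \<phi> (\<lambda>n. u n + \<i> * v n))
        \<le> \<bar>Re (g \<phi>) - Re (\<phi> u)\<bar> + \<bar>Im (g \<phi>) - Re (\<phi> v)\<bar>"
      using cmod_le[of "g \<phi> - \<phi> (\<lambda>n. u n + \<i> * v n)"] by simp
    moreover have "\<bar>Re (g \<phi>) - Re (\<phi> u)\<bar> < e/2" "\<bar>Im (g \<phi>) - Re (\<phi> v)\<bar> < e/2"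
      using u(3) v(3) \<phi> by auto
    ultimately show ?thesis
      by linarith
  qed
  then show ?thesis
    using add_mem[OF u(1) scale_mem[OF v(1)]] by blast
qed

lemma continuous_comp_iota_mem:
  assumes g: "continuous_on X g"
  shows "(\<lambda>n. g (iota A n)) \<in> A"
proof (rule uniform_approx_mem)
  have "bounded (g ` X)"
    by (rule compact_imp_bounded[OF compact_continuous_image[OF g compact_max_ideal_space]])
  then show "(\<lambda>n. g (iota A n)) \<in> linfty"
    unfolding linfty_def using iota_mem by (auto intro: bounded_subset)
next
  fix e :: real
  assume "e > 0"
  then obtain h where h: "h \<in> A" "\<forall>\<phi>\<in>X. norm (g \<phi> - \<phi> h) < e"
    using gelfand_approx[OF g] by blast
  have "norm (g (iota A n) - h n) \<le> e" for n
  proof -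
    have "iota A n h = h n"
      using h(1) by (simp add: iota_def)
    then show ?thesis
      using h(2) iota_mem[of n] by (metis less_imp_le)
  qed
  with h(1) show "\<exists>h\<in>A. \<forall>n. norm (g (iota A n) - h n) \<le> e"
    by blast
qed

lemma shift_transpose_iota:
  "(\<And>f. f \<in> A \<Longrightarrow> shiftA f \<in> A) \<Longrightarrow> shift_transpose A (iota A n) = iota A (Suc n)"
  by (auto simp: shift_transpose_def iota_def shiftA_def)

lemma shift_transpose_mem:
  assumes shift: "\<And>f. f \<in> A \<Longrightarrow> shiftA f \<in> A" and \<phi>: "\<phi> \<in> X"
  shows "shift_transpose A \<phi> \<in> X"
proof -
  have shiftA_simps: "shiftA (\<lambda>n. f n + g n) = (\<lambda>n. shiftA f n + shiftA g n)"
    "shiftA (\<lambda>n. c * f n) = (\<lambda>n. c * shiftA f n)"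
    "shiftA (\<lambda>n. f n * g n) = (\<lambda>n. shiftA f n * shiftA g n)"
    "shiftA (\<lambda>n. 1) = (\<lambda>n. 1)" for f g c
    by (simp_all add: shiftA_def)
  show ?thesis
    unfolding max_ideal_space_def shift_transpose_def
    using shift add_mem scale_mem mult_mem one_mem char_add[OF \<phi>] char_scale[OF \<phi>] char_mult[OF \<phi>]
      char_one[OF \<phi>]
    by (auto simp: shiftA_simps intro!: bexI[of _ "\<lambda>n. 1"])
qed

lemma continuous_on_shift_transpose: "continuous_on X (shift_transpose A)"
proof (rule continuous_on_coordinatewise_then_product)
  fix f
  show "continuous_on X (\<lambda>\<phi>. shift_transpose A \<phi> f)"
    by (cases "f \<in> A")
      (simp_all add: shift_transpose_def continuous_on_subset[OF continuous_on_product_coordinates])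
qed

end

theorem proposition2p3:
  fixes A :: "(nat \<Rightarrow> complex) set"
  assumes "unital_cstar_subalg A"
  shows "anqie A \<longleftrightarrow>
    (\<exists>T. continuous_map (weakstar_top A) (weakstar_top A) T \<and>
         (\<forall>n. T (iota A n) = iota A (Suc n)))"
proof -
  interpret unital_cstar_subalgebra A
    by (rule unital_cstar_subalgebra.intro) fact
  have continuous_map_iff:
    "continuous_map (weakstar_top A) (weakstar_top A) T \<longleftrightarrow> continuous_on X T \<and> T \<in> X \<rightarrow> X" for T
    by (simp add: weakstar_top_eq)
  show ?thesis
  proof
    assume "anqie A"
    then have shift: "\<And>f. f \<in> A \<Longrightarrow> shiftA f \<in> A"
      by (simp add: anqie_def)
    then show "\<exists>T. continuous_map (weakstar_top A) (weakstar_top A) T \<and> (\<forall>n. T (iota A n) = iota A (Suc n))"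
      using continuous_on_shift_transpose shift_transpose_mem[OF shift] shift_transpose_iota[OF shift]
      by (intro exI[of _ "shift_transpose A"]) (simp add: continuous_map_iff)
  next
    assume "\<exists>T. continuous_map (weakstar_top A) (weakstar_top A) T \<and> (\<forall>n. T (iota A n) = iota A (Suc n))"
    then obtain T where T: "continuous_on X T" "\<And>n. T (iota A n) = iota A (Suc n)"
      by (auto simp: continuous_map_iff)
    have "shiftA f = (\<lambda>n. T (iota A n) f)" if "f \<in> A" for f
      using T(2) that by (simp add: shiftA_def iota_def)
    then have "\<forall>f\<in>A. shiftA f \<in> A"
      using continuous_comp_iota_mem[OF continuous_on_product_then_coordinatewise[OF T(1)]] by simp
    then show "anqie A"
      using assms by (simp add: anqie_def)
  qed
qed

end
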